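(* Let $f^*\in L^2(\mathcal D)$ with $\mathbb E_{x\sim\mathcal D}[f^*(x)^2]=1$. Let $f_{\mathrm{teacher}}$ be shrinkage-optimal with respect to $f^*$ and let $f_{\mathrm{student}}$ be any function with $\mathbb E_x[f_{\mathrm{student}}(x)^2]\le\mathbb E_x[f_{\mathrm{teacher}}(x)^2]$. With $\mathcal L_{TE}=\mathbb E_x[(f_{\mathrm{teacher}}-f^* )^2]$ and $\mathcal L_{ST}=\mathbb E_x[(f_{\mathrm{student}}-f^* )^2]$, $$\mathcal L_{ST}\ \ge\ \big(1-\sqrt{1-\mathcal L_{TE}}\big)^2\ \ge\ \frac14\,\mathcal L_{TE}^2 .$$
   Context: $\mathcal D$ is a probability distribution on an input space $\mathcal X$. Shrinkage optimality: given $\hat f,f_{\mathrm{train}}:\mathcal X\to\mathbb R$, $\hat f$ is shrinkage-optimal with respect to $f_{\mathrm{train}}$ if for every $0\le\alpha\le1$, $\mathbb E_x[(\hat f(x)-f_{\mathrm{train}}(x))^2]\le\mathbb E_x[(\alpha\hat f(x)-f_{\mathrm{train}}(x))^2]$. All functions are in $L^2(\mathcal D)$. *)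

theory Defs
  imports "HOL-Probability.Probability"
begin

definition L2_fun :: "'a measure \<Rightarrow> ('a \<Rightarrow> real) \<Rightarrow> bool" where
  "L2_fun M f \<longleftrightarrow> f \<in> borel_measurable M \<and> integrable M (\<lambda>x. (f x)\<^sup>2)"

definition shrinkage_optimal :: "'a measure \<Rightarrow> ('a \<Rightarrow> real) \<Rightarrow> ('a \<Rightarrow> real) \<Rightarrow> bool" where
  "shrinkage_optimal M fhat ftrain \<longleftrightarrow>
     (\<forall>\<alpha>::real. 0 \<le> \<alpha> \<and> \<alpha> \<le> 1 \<longrightarrow>
        (\<integral>x. (fhat x - ftrain x)\<^sup>2 \<partial>M) \<le> (\<integral>x. (\<alpha> * fhat x - ftrain x)\<^sup>2 \<partial>M))"

end

theory Submission
  imports Defs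
begin

text \<open>
  Comparing the shrinkage objective at \<open>\<alpha> = 1\<close> with its value at the unconstrained minimiser
  \<open>\<alpha> = \<langle>f\<^sub>T, f\<^sup>*\<rangle> / \<parallel>f\<^sub>T\<parallel>\<^sup>2\<close> shows \<open>\<parallel>f\<^sub>T\<parallel>\<^sup>2 \<le> \<langle>f\<^sub>T, f\<^sup>*\<rangle>\<close>, hence
  \<open>\<L>\<^sub>T\<^sub>E = \<parallel>f\<^sub>T\<parallel>\<^sup>2 - 2\<langle>f\<^sub>T, f\<^sup>*\<rangle> + 1 \<le> 1 - \<parallel>f\<^sub>T\<parallel>\<^sup>2\<close>. So the student satisfies
  \<open>\<parallel>f\<^sub>S\<parallel> \<le> \<parallel>f\<^sub>T\<parallel> \<le> sqrt (1 - \<L>\<^sub>T\<^sub>E) \<le> 1\<close>, and the reverse triangle inequality in \<open>L\<^sup>2\<close>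
  gives \<open>\<L>\<^sub>S\<^sub>T \<ge> (1 - \<parallel>f\<^sub>S\<parallel>)\<^sup>2 \<ge> (1 - sqrt (1 - \<L>\<^sub>T\<^sub>E))\<^sup>2\<close>. The last bound is
  \<open>1 - sqrt (1 - L) \<ge> L / 2\<close>.
\<close>

lemma L2_fun_integrable_mult:
  assumes "L2_fun M f" "L2_fun M g"
  shows "integrable M (\<lambda>x. f x * g x)"
proof (rule Bochner_Integration.integrable_bound)
  show "integrable M (\<lambda>x. ((f x)\<^sup>2 + (g x)\<^sup>2) / 2)"
    using assms unfolding L2_fun_def by auto
  show "(\<lambda>x. f x * g x) \<in> borel_measurable M"
    using assms unfolding L2_fun_def by auto
  have "\<bar>f x * g x\<bar> \<le> ((f x)\<^sup>2 + (g x)\<^sup>2) / 2" for x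
    using sum_squares_bound[of "\<bar>f x\<bar>" "\<bar>g x\<bar>"] by (simp add: abs_mult)
  then show "AE x in M. norm (f x * g x) \<le> norm (((f x)\<^sup>2 + (g x)\<^sup>2) / 2)"
    by simp
qed

lemma integral_square_lincomb:
  assumes "L2_fun M f" "L2_fun M g"
  shows "(\<integral>x. (p * f x + q * g x)\<^sup>2 \<partial>M) =
    p\<^sup>2 * (\<integral>x. (f x)\<^sup>2 \<partial>M) + 2 * p * q * (\<integral>x. f x * g x \<partial>M) + q\<^sup>2 * (\<integral>x. (g x)\<^sup>2 \<partial>M)"
proof -
  have "(\<lambda>x. (p * f x + q * g x)\<^sup>2) =
      (\<lambda>x. p\<^sup>2 * (f x)\<^sup>2 + 2 * p * q * (f x * g x) + q\<^sup>2 * (g x)\<^sup>2)"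
    by (auto simp: power2_eq_square algebra_simps)
  then show ?thesis
    using assms L2_fun_integrable_mult[OF assms] unfolding L2_fun_def by simp
qed

lemma integral_square_diff:
  assumes "L2_fun M f" "L2_fun M g"
  shows "(\<integral>x. (f x - g x)\<^sup>2 \<partial>M) =
    (\<integral>x. (f x)\<^sup>2 \<partial>M) - 2 * (\<integral>x. f x * g x \<partial>M) + (\<integral>x. (g x)\<^sup>2 \<partial>M)"
  using integral_square_lincomb[OF assms, of 1 "-1"] by simp

lemma L2_Cauchy_Schwarz:
  assumes "L2_fun M f" "L2_fun M g"
  shows "(\<integral>x. f x * g x \<partial>M)\<^sup>2 \<le> (\<integral>x. (f x)\<^sup>2 \<partial>M) * (\<integral>x. (g x)\<^sup>2 \<partial>M)"
proof -
  define A where "A = (\<integral>x. (f x)\<^sup>2 \<partial>M)"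
  define B where "B = (\<integral>x. (g x)\<^sup>2 \<partial>M)"
  define c where "c = (\<integral>x. f x * g x \<partial>M)"
  have quadratic_nonneg: "0 \<le> p\<^sup>2 * A + 2 * p * q * c + q\<^sup>2 * B" for p q
  proof -
    have "0 \<le> (\<integral>x. (p * f x + q * g x)\<^sup>2 \<partial>M)"
      by simp
    also have "\<dots> = p\<^sup>2 * A + 2 * p * q * c + q\<^sup>2 * B"
      unfolding A_def B_def c_def by (rule integral_square_lincomb[OF assms])
    finally show ?thesis .
  qed
  have "0 \<le> A"
    unfolding A_def by simp
  show ?thesis
  proof (cases "A = 0")
    case True
    have "c = 0"
    proof (rule ccontr)
      assume "c \<noteq> 0"
      then show False
        using quadratic_nonneg[of "- (B + 1) / (2 * c)" 1] True by (simp add: field_simps)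
    qed
    then show ?thesis
      unfolding c_def[symmetric] A_def[symmetric] B_def[symmetric] using True by simp
  next
    case False
    with \<open>0 \<le> A\<close> have "0 < A"
      by simp
    have "0 \<le> A * (A * B - c\<^sup>2)"
      using quadratic_nonneg[of "- c" A] by (simp add: power2_eq_square algebra_simps)
    then show ?thesis
      using \<open>0 < A\<close> unfolding c_def[symmetric] A_def[symmetric] B_def[symmetric]
      by (simp add: zero_le_mult_iff)
  qed
qed

lemma L2_norm_diff_le_dist:
  assumes "L2_fun M f" "L2_fun M g"
  shows "(sqrt (\<integral>x. (f x)\<^sup>2 \<partial>M) - sqrt (\<integral>x. (g x)\<^sup>2 \<partial>M))\<^sup>2 \<le> (\<integral>x. (f x - g x)\<^sup>2 \<partial>M)"
proof -
  define A where "A = (\<integral>x. (f x)\<^sup>2 \<partial>M)"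
  define B where "B = (\<integral>x. (g x)\<^sup>2 \<partial>M)"
  define c where "c = (\<integral>x. f x * g x \<partial>M)"
  have "A \<ge> 0" "B \<ge> 0"
    unfolding A_def B_def by simp_all
  have "c \<le> sqrt (c\<^sup>2)"
    by simp
  also have "\<dots> \<le> sqrt (A * B)"
    using L2_Cauchy_Schwarz[OF assms] unfolding A_def B_def c_def by (rule real_sqrt_le_mono)
  finally have "c \<le> sqrt A * sqrt B"
    by (simp add: real_sqrt_mult)
  then have "(sqrt A - sqrt B)\<^sup>2 \<le> A - 2 * c + B"
    using \<open>A \<ge> 0\<close> \<open>B \<ge> 0\<close> by (simp add: power2_diff)
  then show ?thesis
    using integral_square_diff[OF assms] unfolding A_def B_def c_def by simp
qed

lemma quadratic_min_at_one_imp_le: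
  fixes a b :: real
  assumes "\<And>\<alpha>. 0 \<le> \<alpha> \<Longrightarrow> \<alpha> \<le> 1 \<Longrightarrow> a - 2 * b \<le> \<alpha>\<^sup>2 * a - 2 * \<alpha> * b"
  shows "a \<le> b"
proof (rule ccontr)
  assume "\<not> a \<le> b"
  moreover have "a \<le> 2 * b"
    using assms[of 0] by simp
  ultimately have "b < a" "0 < a" "0 \<le> b"
    by linarith+
  then have "a - 2 * b \<le> (b / a)\<^sup>2 * a - 2 * (b / a) * b"
    by (intro assms) simp_all
  then have "(a - b)\<^sup>2 \<le> 0"
    using \<open>0 < a\<close> by (simp add: power2_eq_square field_simps)
  with \<open>b < a\<close> show False
    by simp
qed

lemma shrinkage_optimal_imp_norm_le_inner:
  assumes "shrinkage_optimal M f g" "L2_fun M f" "L2_fun M g"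
  shows "(\<integral>x. (f x)\<^sup>2 \<partial>M) \<le> (\<integral>x. f x * g x \<partial>M)"
proof (rule quadratic_min_at_one_imp_le)
  fix \<alpha> :: real
  assume "0 \<le> \<alpha>" "\<alpha> \<le> 1"
  then have "(\<integral>x. (f x - g x)\<^sup>2 \<partial>M) \<le> (\<integral>x. (\<alpha> * f x - g x)\<^sup>2 \<partial>M)"
    using assms(1) unfolding shrinkage_optimal_def by blast
  then show "(\<integral>x. (f x)\<^sup>2 \<partial>M) - 2 * (\<integral>x. f x * g x \<partial>M)
      \<le> \<alpha>\<^sup>2 * (\<integral>x. (f x)\<^sup>2 \<partial>M) - 2 * \<alpha> * (\<integral>x. f x * g x \<partial>M)"
    using integral_square_lincomb[OF assms(2,3), of 1 "-1"]
      integral_square_lincomb[OF assms(2,3), of \<alpha> "-1"]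
    by simp
qed

lemma shrinkage_optimal_norm_le:
  assumes "shrinkage_optimal M f g" "L2_fun M f" "L2_fun M g"
  shows "(\<integral>x. (f x)\<^sup>2 \<partial>M) \<le> (\<integral>x. (g x)\<^sup>2 \<partial>M) - (\<integral>x. (f x - g x)\<^sup>2 \<partial>M)"
  using shrinkage_optimal_imp_norm_le_inner[OF assms] integral_square_diff[OF assms(2,3)]
  by simp

lemma half_le_one_minus_sqrt_one_minus:
  fixes L :: real
  assumes "0 \<le> L" "L \<le> 1"
  shows "L / 2 \<le> 1 - sqrt (1 - L)"
proof -
  have "sqrt (1 - L) \<le> 1 - L / 2"
    using assms by (intro real_le_lsqrt) (auto simp: power2_eq_square algebra_simps)
  then show ?thesis
    by simp
qed

theorem theorem4p5:
  fixes M :: "'a measure" and fstar fteacher fstudent :: "'a \<Rightarrow> real"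
  assumes "prob_space M"
    and "L2_fun M fstar" and "L2_fun M fteacher" and "L2_fun M fstudent"
    and "(\<integral>x. (fstar x)\<^sup>2 \<partial>M) = 1"
    and "shrinkage_optimal M fteacher fstar"
    and "(\<integral>x. (fstudent x)\<^sup>2 \<partial>M) \<le> (\<integral>x. (fteacher x)\<^sup>2 \<partial>M)"
  shows "(\<integral>x. (fstudent x - fstar x)\<^sup>2 \<partial>M)
           \<ge> (1 - sqrt (1 - (\<integral>x. (fteacher x - fstar x)\<^sup>2 \<partial>M)))\<^sup>2
       \<and> (1 - sqrt (1 - (\<integral>x. (fteacher x - fstar x)\<^sup>2 \<partial>M)))\<^sup>2
           \<ge> (1/4) * (\<integral>x. (fteacher x - fstar x)\<^sup>2 \<partial>M)\<^sup>2"
proof -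
  define L where "L = (\<integral>x. (fteacher x - fstar x)\<^sup>2 \<partial>M)"
  define S where "S = (\<integral>x. (fstudent x)\<^sup>2 \<partial>M)"
  have "S \<le> 1 - L"
    using assms(7) shrinkage_optimal_norm_le[OF assms(6,3,2)] assms(5)
    unfolding S_def L_def by simp
  moreover have "0 \<le> S" "0 \<le> L"
    unfolding S_def L_def by simp_all
  ultimately have "sqrt S \<le> sqrt (1 - L)" "sqrt (1 - L) \<le> 1" "L \<le> 1"
    by simp_all
  then have "(1 - sqrt (1 - L))\<^sup>2 \<le> (sqrt S - 1)\<^sup>2"
    by (simp add: power2_commute power_mono)
  also have "\<dots> \<le> (\<integral>x. (fstudent x - fstar x)\<^sup>2 \<partial>M)"
    using L2_norm_diff_le_dist[OF assms(4,2)] assms(5) unfolding S_def by simp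
  finally have student: "(1 - sqrt (1 - L))\<^sup>2 \<le> (\<integral>x. (fstudent x - fstar x)\<^sup>2 \<partial>M)" .
  have "(L / 2)\<^sup>2 \<le> (1 - sqrt (1 - L))\<^sup>2"
    using half_le_one_minus_sqrt_one_minus[OF \<open>0 \<le> L\<close> \<open>L \<le> 1\<close>] \<open>0 \<le> L\<close>
    by (intro power_mono) simp_all
  then have "(1/4) * L\<^sup>2 \<le> (1 - sqrt (1 - L))\<^sup>2"
    by (simp add: power_divide)
  with student show ?thesis
    unfolding L_def by simp
qed

end
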